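(* Let $L$ be a positive integer and let $(\mathbf{F},\mathbf{G})$ be an eigencomplementary pair of matrices $\mathbf{F},\mathbf{G}\in\mathbb{R}^{L\times L}$. Then: (1) if $\mathbf{F}$ is regular (invertible), then $\mathbf{F}^{-1}\mathbf{G}$ is negative semi-definite; (2) if $\mathbf{G}$ is regular, then $\mathbf{F}\mathbf{G}^{-1}$ is negative semi-definite.
   Context: A pair $(\mathbf{F},\mathbf{G})$ of real symmetric $L\times L$ matrices is called eigencomplementary if $\mathbf{F}$ is negative semi-definite, $\mathbf{G}$ is positive semi-definite, $\mathbf{F}$ and $\mathbf{G}$ have a common basis of eigenvectors of $\mathbb{R}^L$, and, in the case that $\mathbf{F}$ and $\mathbf{G}$ are both singular, additionally $\bigoplus_{\xi\in\sigma(\mathbf{F}),\,\xi<0}\operatorname{Eig}_{\mathbf{F}}(\xi)=\operatorname{Eig}_{\mathbf{G}}(0)$, where $\sigma(\cdot)$ denotes the spectrum and $\operatorname{Eig}_{\mathbf{M}}(\xi)$ the eigenspace of $\mathbf{M}$ for the eigenvalue $\xi$. *)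

theory Defs
  imports "HOL-Analysis.Analysis"
begin

text \<open>Real L x L matrices are rendered as real^'n^'n with L = CARD('n).\<close>

definition sym_mat :: "real^'n^'n \<Rightarrow> bool" where
  "sym_mat A \<longleftrightarrow> transpose A = A"

definition pos_semidef :: "real^'n^'n \<Rightarrow> bool" where
  "pos_semidef A \<longleftrightarrow> (\<forall>x. 0 \<le> x \<bullet> (A *v x))"

definition neg_semidef :: "real^'n^'n \<Rightarrow> bool" where
  "neg_semidef A \<longleftrightarrow> (\<forall>x. x \<bullet> (A *v x) \<le> 0)"

definition is_eigenvector :: "real^'n^'n \<Rightarrow> real^'n \<Rightarrow> bool" where
  "is_eigenvector A v \<longleftrightarrow> v \<noteq> 0 \<and> (\<exists>\<xi>. A *v v = \<xi> *\<^sub>R v)"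

definition mat_spectrum :: "real^'n^'n \<Rightarrow> real set" where
  "mat_spectrum A = {\<xi>. \<exists>v. v \<noteq> 0 \<and> A *v v = \<xi> *\<^sub>R v}"

definition eigenspace :: "real^'n^'n \<Rightarrow> real \<Rightarrow> (real^'n) set" where
  "eigenspace A \<xi> = {v. A *v v = \<xi> *\<^sub>R v}"

text \<open>The (internal, necessarily direct) sum of the eigenspaces of F for negative
  eigenvalues is the span of their union.\<close>

definition eigencomplementary :: "real^'n^'n \<Rightarrow> real^'n^'n \<Rightarrow> bool" where
  "eigencomplementary F G \<longleftrightarrow>
     sym_mat F \<and> sym_mat G \<and> neg_semidef F \<and> pos_semidef G \<and>
     (\<exists>B. independent B \<and> span B = UNIV \<and>
          (\<forall>v\<in>B. is_eigenvector F v \<and> is_eigenvector G v)) \<and>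
     ((\<not> invertible F \<and> \<not> invertible G) \<longrightarrow>
        span (\<Union>\<xi>\<in>{\<xi>\<in>mat_spectrum F. \<xi> < 0}. eigenspace F \<xi>) = eigenspace G 0)"

end

theory Submission
  imports Defs
begin

text \<open>A common eigenbasis makes \<open>F\<close> and \<open>G\<close> commute, so \<open>F\<^sup>-\<^sup>1 G\<close> and
  \<open>F G\<^sup>-\<^sup>1 = G\<^sup>-\<^sup>1 F\<close> are symmetric, and every basis vector is an eigenvector of them with
  eigenvalue \<open>b / a\<close> resp. \<open>a / b\<close>, where \<open>a \<le> 0\<close> and \<open>b \<ge> 0\<close> are its eigenvalues for
  \<open>F\<close> and \<open>G\<close>. A symmetric matrix with a spanning set of eigenvectors for nonpositive
  eigenvalues is negative semi-definite, since eigenvectors for distinct eigenvalues are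
  orthogonal.\<close>

lemma sym_mat_inner_matrix_vector_mult:
  fixes M :: "real^'n^'n"
  assumes "sym_mat M"
  shows "(M *v x) \<bullet> y = x \<bullet> (M *v y)"
proof -
  have "x \<bullet> (M *v y) = (x v* M) \<bullet> y" by (simp add: dot_lmul_matrix)
  also have "x v* M = transpose M *v x" by simp
  finally show ?thesis using assms unfolding sym_mat_def by simp
qed

lemma sym_mat_eigenvectors_orthogonal:
  fixes M :: "real^'n^'n"
  assumes "sym_mat M" "M *v v = a *\<^sub>R v" "M *v w = b *\<^sub>R w" "a \<noteq> b"
  shows "v \<bullet> w = 0"
proof -
  have "(M *v v) \<bullet> w = v \<bullet> (M *v w)"
    using assms(1) by (rule sym_mat_inner_matrix_vector_mult)
  then have "a * (v \<bullet> w) = b * (v \<bullet> w)" using assms(2,3) by simp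
  then show ?thesis using assms(4) by simp
qed

lemma sym_mat_sum_eigenvectors_quadratic_form_nonpos:
  fixes M :: "real^'n^'n"
  assumes sym: "sym_mat M" and "finite S"
    and eigen: "\<And>m. m \<in> S \<Longrightarrow> M *v y m = m *\<^sub>R y m"
    and nonpos: "\<And>m. m \<in> S \<Longrightarrow> m \<le> 0"
  shows "(\<Sum>m\<in>S. y m) \<bullet> (M *v (\<Sum>m\<in>S. y m)) \<le> 0"
proof -
  have orth: "y m \<bullet> y k = 0" if "m \<in> S" "k \<in> S" "m \<noteq> k" for m k
    using sym eigen[OF that(1)] eigen[OF that(2)] that(3)
    by (rule sym_mat_eigenvectors_orthogonal)
  have "M *v (\<Sum>m\<in>S. y m) = (\<Sum>m\<in>S. m *\<^sub>R y m)"
    using eigen by (simp add: vec.sum)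
  then have "(\<Sum>m\<in>S. y m) \<bullet> (M *v (\<Sum>m\<in>S. y m)) = (\<Sum>k\<in>S. \<Sum>m\<in>S. k * (y m \<bullet> y k))"
    by (simp add: inner_sum_left inner_sum_right sum_distrib_left)
  also have "\<dots> = (\<Sum>k\<in>S. \<Sum>m\<in>S. if k = m then k * (y k \<bullet> y k) else 0)"
    by (intro sum.cong refl) (auto simp: orth)
  also have "\<dots> = (\<Sum>k\<in>S. k * (y k \<bullet> y k))"
    using \<open>finite S\<close> by simp
  also have "\<dots> \<le> 0"
    using nonpos by (intro sum_nonpos mult_nonpos_nonneg) auto
  finally show ?thesis .
qed

lemma neg_semidef_if_spanning_eigenvectors:
  fixes M :: "real^'n^'n"
  assumes sym: "sym_mat M" and "span B = UNIV"
    and eigen: "\<And>v. v \<in> B \<Longrightarrow> M *v v = \<mu> v *\<^sub>R v"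
    and nonpos: "\<And>v. v \<in> B \<Longrightarrow> \<mu> v \<le> 0"
  shows "neg_semidef M"
  unfolding neg_semidef_def
proof
  fix x :: "real^'n"
  have "x \<in> span B" using \<open>span B = UNIV\<close> by simp
  then obtain t r where t: "finite t" "t \<subseteq> B" and x: "x = (\<Sum>v\<in>t. r v *\<^sub>R v)"
    unfolding span_explicit by blast
  define y where "y m = (\<Sum>v\<in>{v\<in>t. \<mu> v = m}. r v *\<^sub>R v)" for m
  have x_sum: "x = (\<Sum>m\<in>\<mu> ` t. y m)"
    unfolding x y_def by (rule sum.image_gen[OF t(1)])
  have "M *v y m = m *\<^sub>R y m" for m
  proof -
    have "M *v y m = (\<Sum>v\<in>{v\<in>t. \<mu> v = m}. r v *\<^sub>R (M *v v))"
      unfolding y_def by (simp add: vec.sum matrix_vector_mult_scaleR)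
    also have "\<dots> = (\<Sum>v\<in>{v\<in>t. \<mu> v = m}. m *\<^sub>R (r v *\<^sub>R v))"
      using eigen t(2) by (intro sum.cong refl) auto
    also have "\<dots> = m *\<^sub>R y m"
      unfolding y_def by (simp add: scaleR_sum_right)
    finally show ?thesis .
  qed
  moreover have "m \<le> 0" if "m \<in> \<mu> ` t" for m
    using that nonpos t(2) by auto
  ultimately show "x \<bullet> (M *v x) \<le> 0"
    unfolding x_sum using sym t(1)
    by (intro sym_mat_sum_eigenvectors_quadratic_form_nonpos) auto
qed

lemma matrix_mul_commute_if_spanning_common_eigenvectors:
  fixes A C :: "real^'n^'n"
  assumes "span B = UNIV"
    and "\<And>v. v \<in> B \<Longrightarrow> A *v v = \<alpha> v *\<^sub>R v"
    and "\<And>v. v \<in> B \<Longrightarrow> C *v v = \<gamma> v *\<^sub>R v"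
  shows "A ** C = C ** A"
proof -
  have "(A ** C) *v v = (C ** A) *v v" if "v \<in> B" for v
    using assms(2,3)[OF that]
    by (simp add: matrix_vector_mul_assoc[symmetric] matrix_vector_mult_scaleR)
  then have "(A ** C) *v x = (C ** A) *v x" for x
    using linear_eq_on_span[OF matrix_vector_mul_linear matrix_vector_mul_linear, of B]
      \<open>span B = UNIV\<close> by blast
  then show ?thesis by (simp add: matrix_eq)
qed

lemma matrix_inv_left:
  fixes A :: "real^'n^'n"
  assumes "invertible A"
  shows "matrix_inv A ** A = mat 1"
  using assms unfolding invertible_def matrix_inv_def by (rule someI2_ex) simp

lemma matrix_inv_right:
  fixes A :: "real^'n^'n"
  assumes "invertible A"
  shows "A ** matrix_inv A = mat 1"
  using assms unfolding invertible_def matrix_inv_def by (rule someI2_ex) simp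

lemma sym_mat_matrix_inv:
  fixes A :: "real^'n^'n"
  assumes "invertible A" "sym_mat A"
  shows "sym_mat (matrix_inv A)"
proof -
  let ?X = "transpose (matrix_inv A)"
  have "?X ** A = mat 1"
    using matrix_inv_right[OF assms(1)] assms(2) unfolding sym_mat_def
    by (metis matrix_transpose_mul transpose_mat)
  have "?X = ?X ** (A ** matrix_inv A)"
    by (simp add: matrix_inv_right[OF assms(1)])
  also have "\<dots> = matrix_inv A"
    using \<open>?X ** A = mat 1\<close> by (simp add: matrix_mul_assoc)
  finally show ?thesis unfolding sym_mat_def .
qed

lemma matrix_inv_mul_commute:
  fixes A C :: "real^'n^'n"
  assumes "invertible A" "A ** C = C ** A"
  shows "matrix_inv A ** C = C ** matrix_inv A"
proof -
  have "matrix_inv A ** C = matrix_inv A ** C ** (A ** matrix_inv A)"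
    by (simp add: matrix_inv_right[OF assms(1)])
  also have "\<dots> = matrix_inv A ** (A ** C) ** matrix_inv A"
    using assms(2) by (simp add: matrix_mul_assoc)
  also have "\<dots> = matrix_inv A ** A ** C ** matrix_inv A"
    by (simp add: matrix_mul_assoc)
  also have "\<dots> = C ** matrix_inv A"
    by (simp add: matrix_inv_left[OF assms(1)])
  finally show ?thesis .
qed

lemma matrix_inv_eigenvector:
  fixes A :: "real^'n^'n"
  assumes "invertible A" "v \<noteq> 0" "A *v v = a *\<^sub>R v"
  shows "a \<noteq> 0" and "matrix_inv A *v v = inverse a *\<^sub>R v"
proof -
  have v: "v = a *\<^sub>R (matrix_inv A *v v)"
    by (metis assms(1,3) matrix_inv_left matrix_vector_mul_assoc matrix_vector_mul_lid
        matrix_vector_mult_scaleR)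
  then show "a \<noteq> 0" using assms(2) by auto
  then show "matrix_inv A *v v = inverse a *\<^sub>R v"
    by (subst v) simp
qed

lemma neg_semidef_matrix_inv_mul:
  fixes A C :: "real^'n^'n"
  assumes "sym_mat A" "sym_mat C" "invertible A" "span B = UNIV" "0 \<notin> B"
    and eigen_A: "\<And>v. v \<in> B \<Longrightarrow> A *v v = \<alpha> v *\<^sub>R v"
    and eigen_C: "\<And>v. v \<in> B \<Longrightarrow> C *v v = \<gamma> v *\<^sub>R v"
    and opposite_signs: "\<And>v. v \<in> B \<Longrightarrow> \<alpha> v * \<gamma> v \<le> 0"
  shows "neg_semidef (matrix_inv A ** C)"
proof (rule neg_semidef_if_spanning_eigenvectors)
  have "A ** C = C ** A"
    using assms(4) eigen_A eigen_C by (rule matrix_mul_commute_if_spanning_common_eigenvectors)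
  then show "sym_mat (matrix_inv A ** C)"
    using sym_mat_matrix_inv[OF assms(3,1)] assms(2) matrix_inv_mul_commute[OF assms(3)]
    unfolding sym_mat_def by (simp add: matrix_transpose_mul)
  show "(matrix_inv A ** C) *v v = (\<gamma> v / \<alpha> v) *\<^sub>R v" if "v \<in> B" for v
  proof -
    have "matrix_inv A *v v = inverse (\<alpha> v) *\<^sub>R v"
      using matrix_inv_eigenvector(2)[OF assms(3) _ eigen_A[OF that]] that assms(5) by auto
    then show ?thesis
      using eigen_C[OF that]
      by (simp add: matrix_vector_mul_assoc[symmetric] matrix_vector_mult_scaleR divide_inverse)
  qed
  show "\<gamma> v / \<alpha> v \<le> 0" if "v \<in> B" for v
    using opposite_signs[OF that] by (auto simp: divide_le_0_iff mult_le_0_iff)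
qed (use assms(4) in simp)

lemma eigenvalue_nonpos_if_neg_semidef:
  fixes A :: "real^'n^'n"
  assumes "neg_semidef A" "v \<noteq> 0" "A *v v = a *\<^sub>R v"
  shows "a \<le> 0"
proof -
  have "a * (v \<bullet> v) \<le> 0"
    using assms(1,3) unfolding neg_semidef_def by (metis inner_scaleR_right)
  moreover have "0 < v \<bullet> v" using assms(2) by simp
  ultimately show ?thesis by (simp add: mult_le_0_iff)
qed

lemma eigenvalue_nonneg_if_pos_semidef:
  fixes A :: "real^'n^'n"
  assumes "pos_semidef A" "v \<noteq> 0" "A *v v = a *\<^sub>R v"
  shows "0 \<le> a"
proof -
  have "0 \<le> a * (v \<bullet> v)"
    using assms(1,3) unfolding pos_semidef_def by (metis inner_scaleR_right)
  moreover have "0 < v \<bullet> v" using assms(2) by simp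
  ultimately show ?thesis by (simp add: zero_le_mult_iff)
qed

theorem lemma2p5:
  fixes F G :: "real^'n^'n"
  assumes "eigencomplementary F G"
  shows "(invertible F \<longrightarrow> neg_semidef (matrix_inv F ** G)) \<and>
         (invertible G \<longrightarrow> neg_semidef (F ** matrix_inv G))"
proof -
  obtain B where sym: "sym_mat F" "sym_mat G" and "neg_semidef F" "pos_semidef G"
    and "span B = UNIV" and eigen: "\<forall>v\<in>B. is_eigenvector F v \<and> is_eigenvector G v"
    using assms unfolding eigencomplementary_def by blast
  then obtain \<alpha> \<gamma> where "0 \<notin> B"
    and eigen_F: "\<And>v. v \<in> B \<Longrightarrow> F *v v = \<alpha> v *\<^sub>R v"
    and eigen_G: "\<And>v. v \<in> B \<Longrightarrow> G *v v = \<gamma> v *\<^sub>R v"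
    unfolding is_eigenvector_def by metis
  have "\<alpha> v * \<gamma> v \<le> 0" if "v \<in> B" for v
    using eigenvalue_nonpos_if_neg_semidef[OF \<open>neg_semidef F\<close> _ eigen_F]
      eigenvalue_nonneg_if_pos_semidef[OF \<open>pos_semidef G\<close> _ eigen_G] that \<open>0 \<notin> B\<close>
    by (metis mult_nonpos_nonneg)
  moreover have "F ** matrix_inv G = matrix_inv G ** F" if "invertible G"
    using matrix_inv_mul_commute[OF that]
      matrix_mul_commute_if_spanning_common_eigenvectors[OF \<open>span B = UNIV\<close> eigen_G eigen_F]
    by simp
  ultimately show ?thesis
    using neg_semidef_matrix_inv_mul[OF sym _ \<open>span B = UNIV\<close> \<open>0 \<notin> B\<close> eigen_F eigen_G]
      neg_semidef_matrix_inv_mul[OF sym(2,1) _ \<open>span B = UNIV\<close> \<open>0 \<notin> B\<close> eigen_G eigen_F]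
    by (auto simp: mult.commute)
qed

end
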